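(* If the hazard function $\lambda(t)$ of the random lifetime $X$ is decreasing in $t\in\mathcal S$, then $$H^w(t)\ge -\delta(t)\log\lambda(t)\qquad\text{for all } t\in\mathcal S.$$
   Context: $X$ is an absolutely continuous non-negative random variable with density $f$, support $\mathcal S=(0,\nu)$, $\nu\le+\infty$, survival function $\overline F$, and hazard function $\lambda(t)=f(t)/\overline F(t)$; "decreasing" means non-increasing; $\log$ is the natural logarithm. Weighted residual entropy: $H^w(t)=-\int_t^{\infty}x\,\frac{f(x)}{\overline F(t)}\log\frac{f(x)}{\overline F(t)}\,dx$. Conditional mean: $\delta(t)=\mathrm{E}(X\mid X>t)=\frac{1}{\overline F(t)}\int_t^\infty x f(x)\,dx$. *)

theory Defs
  imports "HOL-Probability.Probability"
begin

definition surv :: "(real \<Rightarrow> real) \<Rightarrow> real \<Rightarrow> real" where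
  "surv f t = (LINT x:{t<..}|lborel. f x)"

definition hazard :: "(real \<Rightarrow> real) \<Rightarrow> real \<Rightarrow> real" where
  "hazard f t = f t / surv f t"

definition cond_mean :: "(real \<Rightarrow> real) \<Rightarrow> real \<Rightarrow> real" where
  "cond_mean f t = (LINT x:{t<..}|lborel. x * f x) / surv f t"

definition wres_entropy :: "(real \<Rightarrow> real) \<Rightarrow> real \<Rightarrow> real" where
  "wres_entropy f t =
     - (LINT x:{t<..}|lborel. x * (f x / surv f t) * ln (f x / surv f t))"

end

(* A decreasing hazard forces the density to decrease on the support, because
   f = \<lambda> * (survival function) with both factors decreasing. So for x > t the
   residual density f x / surv f t is at most f t / surv f t = \<lambda> t; its logarithm is
   at most ln (\<lambda> t), and integrating against the nonnegative weight
   x * f x / surv f t gives H^w(t) \<ge> - \<delta>(t) ln (\<lambda> t). *)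
theory Submission
  imports Defs
begin

lemma set_integral_mono_set:
  fixes f :: "'a \<Rightarrow> real"
  assumes "integrable M f" "\<And>x. f x \<ge> 0" "A \<in> sets M" "B \<in> sets M" "A \<subseteq> B"
  shows "(LINT x:A|M. f x) \<le> (LINT x:B|M. f x)"
  unfolding set_lebesgue_integral_def
  using assms by (intro integral_mono integrable_mult_indicator) (auto split: split_indicator)

lemma (in prob_space) integrable_density_if_distributed:
  assumes "distributed M lborel X (\<lambda>x. ennreal (f x))" "\<And>x. f x \<ge> 0"
  shows "integrable lborel f"
  using distributed_integrable[OF assms(1), of "\<lambda>_. 1"] assms(2)
  by (simp add: distributed_real_measurable[OF _ assms(1)])

lemma surv_nonneg:
  assumes "\<And>x. f x \<ge> 0"
  shows "surv f t \<ge> 0"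
  unfolding surv_def set_lebesgue_integral_def
  using assms by (auto intro!: Bochner_Integration.integral_nonneg simp: indicator_def)

lemma surv_antimono:
  assumes "integrable lborel f" "\<And>x. f x \<ge> 0" "s \<le> t"
  shows "surv f t \<le> surv f s"
  unfolding surv_def using assms by (intro set_integral_mono_set) auto

lemma surv_pos:
  assumes f: "integrable lborel f" "\<And>x. f x \<ge> 0"
    and "a < b" and pos: "\<And>x. a < x \<Longrightarrow> x < b \<Longrightarrow> f x > 0"
  shows "surv f a > 0"
proof -
  have "(LINT x:{a<..<b}|lborel. f x) \<noteq> 0"
  proof
    assume "(LINT x:{a<..<b}|lborel. f x) = 0"
    then have "{a<..<b} \<in> null_sets lborel"
      using f pos by (intro null_if_pos_func_has_zero_int) auto
    with \<open>a < b\<close> show False by (simp add: null_sets_def)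
  qed
  moreover have "(LINT x:{a<..<b}|lborel. f x) \<ge> 0"
    unfolding set_lebesgue_integral_def
    using f by (auto intro!: Bochner_Integration.integral_nonneg simp: indicator_def)
  moreover have "(LINT x:{a<..<b}|lborel. f x) \<le> surv f a"
    unfolding surv_def using f by (intro set_integral_mono_set) auto
  ultimately show ?thesis by linarith
qed

lemma density_le_if_hazard_le:
  assumes "f t \<ge> 0" "surv f x > 0" "surv f x \<le> surv f t" "hazard f x \<le> hazard f t"
  shows "f x \<le> f t"
proof -
  have "f x = hazard f x * surv f x"
    using assms(2) by (simp add: hazard_def)
  also have "\<dots> \<le> hazard f t * surv f x"
    using assms(2,4) by (intro mult_right_mono) auto
  also have "\<dots> \<le> hazard f t * surv f t"
    using assms by (intro mult_left_mono) (auto simp: hazard_def)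
  also have "\<dots> = f t"
    using assms(2,3) by (simp add: hazard_def)
  finally show ?thesis .
qed

lemma density_antimono_if_hazard_antimono:
  fixes f :: "real \<Rightarrow> real" and \<nu> :: ereal
  assumes f: "integrable lborel f" "\<And>x. f x \<ge> 0"
    and supp: "\<And>x. f x > 0 \<longleftrightarrow> (0 < x \<and> ereal x < \<nu>)"
    and haz: "\<And>s t. 0 < s \<Longrightarrow> s \<le> t \<Longrightarrow> ereal t < \<nu> \<Longrightarrow> hazard f t \<le> hazard f s"
    and "0 < t" "t < x"
  shows "f x \<le> f t"
proof (cases "ereal x < \<nu>")
  case False
  then have "f x = 0"
    using supp[of x] f(2)[of x] by auto
  then show ?thesis
    using f(2)[of t] by simp
next
  case True
  then obtain b where "x < b" "ereal b < \<nu>"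
    using ereal_dense2[OF True] by force
  then have "surv f x > 0"
    using f supp \<open>0 < t\<close> \<open>t < x\<close>
    by (intro surv_pos[where b = b]) (auto intro: order.strict_trans[of _ "ereal b"])
  then show ?thesis
  proof (rule density_le_if_hazard_le[rotated])
    show "surv f x \<le> surv f t"
      using f \<open>t < x\<close> by (intro surv_antimono) auto
    show "hazard f x \<le> hazard f t"
      using haz[of t x] \<open>0 < t\<close> \<open>t < x\<close> True by simp
  qed (rule f(2))
qed

lemma wres_entropy_ge_if_density_le:
  fixes f :: "real \<Rightarrow> real"
  assumes nonneg: "\<And>x. f x \<ge> 0" and "t \<ge> 0"
    and le: "\<And>x. t < x \<Longrightarrow> f x \<le> f t"
    and xf: "set_integrable lborel {t<..} (\<lambda>x. x * f x)"
    and xfl: "set_integrable lborel {t<..} (\<lambda>x. x * f x * ln (f x))"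
  shows "wres_entropy f t \<ge> - cond_mean f t * ln (hazard f t)"
proof (cases "surv f t = 0")
  case True
  \<comment> \<open>division by zero makes both sides vanish, so no positivity of surv f t is needed\<close>
  then show ?thesis
    by (simp add: wres_entropy_def cond_mean_def)
next
  case False
  define S where "S = surv f t"
  have S: "S > 0"
    using False surv_nonneg[of f t] nonneg by (simp add: S_def)
  have split_ln: "x * (f x / S) * ln (f x / S) =
      (1 / S) * (x * f x * ln (f x)) - (ln S / S) * (x * f x)" for x
    using S nonneg[of x] by (cases "f x = 0") (auto simp: ln_div field_simps)
  have "(LINT x:{t<..}|lborel. x * (f x / S) * ln (f x / S))
      \<le> (LINT x:{t<..}|lborel. (ln (hazard f t) / S) * (x * f x))"
  proof (rule set_integral_mono)
    show "set_integrable lborel {t<..} (\<lambda>x. x * (f x / S) * ln (f x / S))"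
      unfolding split_ln using xf xfl by (intro set_integral_diff(1) set_integrable_mult_right)
    show "set_integrable lborel {t<..} (\<lambda>x. (ln (hazard f t) / S) * (x * f x))"
      using xf by (rule set_integrable_mult_right)
  next
    fix x assume x: "x \<in> {t<..}"
    show "x * (f x / S) * ln (f x / S) \<le> (ln (hazard f t) / S) * (x * f x)"
    proof (cases "f x = 0")
      case False
      then have "f x > 0"
        using nonneg[of x] by simp
      then have "ln (f x / S) \<le> ln (hazard f t)"
        using S le[of x] x by (simp add: hazard_def S_def divide_right_mono)
      moreover have "x * (f x / S) \<ge> 0"
        using x \<open>t \<ge> 0\<close> nonneg[of x] S by simp
      ultimately show ?thesis
        by (metis mult_left_mono mult.commute mult.left_commute times_divide_eq_right)
    qed simp
  qed
  then show ?thesis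
    by (simp add: wres_entropy_def cond_mean_def S_def mult.commute)
qed

theorem theorem3p3:
  fixes M :: "'a measure" and X :: "'a \<Rightarrow> real"
    and f :: "real \<Rightarrow> real" and \<nu> :: ereal
  assumes "prob_space M"
    and "distributed M lborel X (\<lambda>x. ennreal (f x))"
    and "\<And>x. f x \<ge> 0"
    and "\<nu> > 0"
    and "\<And>x. f x > 0 \<longleftrightarrow> (0 < x \<and> ereal x < \<nu>)"
    and "\<And>s t. 0 < s \<Longrightarrow> s \<le> t \<Longrightarrow> ereal t < \<nu> \<Longrightarrow> hazard f t \<le> hazard f s"
    and "set_integrable lborel {0<..} (\<lambda>x. x * f x)"
    and "\<And>t. 0 < t \<Longrightarrow> ereal t < \<nu> \<Longrightarrow>
           set_integrable lborel {t<..} (\<lambda>x. x * f x * ln (f x))"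
  shows "\<forall>t. 0 < t \<and> ereal t < \<nu> \<longrightarrow>
           wres_entropy f t \<ge> - cond_mean f t * ln (hazard f t)"
proof (intro allI impI, elim conjE)
  fix t assume t: "0 < t" "ereal t < \<nu>"
  have "integrable lborel f"
    using assms(2,3) by (rule prob_space.integrable_density_if_distributed[OF assms(1)])
  then have "f x \<le> f t" if "t < x" for x
    using assms(3,5,6) t(1) that by (rule density_antimono_if_hazard_antimono)
  moreover have "set_integrable lborel {t<..} (\<lambda>x. x * f x)"
    using t(1) by (intro set_integrable_subset[OF assms(7)]) auto
  ultimately show "wres_entropy f t \<ge> - cond_mean f t * ln (hazard f t)"
    using assms(3,8) t by (intro wres_entropy_ge_if_density_le) auto
qed

end
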